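(* Let $X$ be a spectral space and let $Y\subseteq X$. (1) Suppose that $\sup(F)$ exists in $X$ for every nonempty finite subset $F\subseteq Y$. Then $\sup(Z)$ exists for every nonempty subset $Z\subseteq Y$, and $Y_\infty\subseteq\mathrm{Cl}^\mathrm{cons}(Y_f)$. (2) Suppose that $\inf(F)$ exists in $X$ for every nonempty finite subset $F\subseteq Y$. Then $\inf(Z)$ exists for every nonempty subset $Z\subseteq Y$, and $Y_{(\infty)}\subseteq\mathrm{Cl}^\mathrm{cons}(Y_{(f)})$.
   Context: A spectral space is a topological space homeomorphic to the prime spectrum of a commutative unitary ring with the Zariski topology. On a spectral space $X$ the specialization order is defined by $x\leq y$ iff $y\in\mathrm{Cl}(\{x\})$; it is a partial order, and $\sup$, $\inf$ refer to this order. The constructible topology on $X$ is the coarsest topology for which every open and quasi-compact subset of $X$ is clopen; $\mathrm{Cl}^\mathrm{cons}$ denotes closure in it. For $Y\subseteq X$: $Y_f$ is the set of all $\sup(F)$ with $F\subseteq Y$ nonempty finite (whenever the supremum exists), $Y_\infty$ the set of all existing $\sup(Z)$ with $\emptyset\neq Z\subseteq Y$; $Y_{(f)}$ and $Y_{(\infty)}$ are defined in the same way with infima instead of suprema. *)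

theory Defs
  imports "HOL-Analysis.Analysis" "HOL-Algebra.Ideal"
begin

definition Spec :: "('b, 'c) ring_scheme \<Rightarrow> 'b set set" where
  "Spec R = {P. primeideal P R}"

definition zariski :: "('b, 'c) ring_scheme \<Rightarrow> 'b set topology" where
  "zariski R = topology_generated_by {{P \<in> Spec R. f \<notin> P} | f. f \<in> carrier R}"

definition spec_le :: "'a topology \<Rightarrow> 'a \<Rightarrow> 'a \<Rightarrow> bool" where
  "spec_le X x y \<longleftrightarrow> x \<in> topspace X \<and> y \<in> X closure_of {x}"

definition is_sup :: "'a topology \<Rightarrow> 'a set \<Rightarrow> 'a \<Rightarrow> bool" where
  "is_sup X Z s \<longleftrightarrow> s \<in> topspace X \<and> (\<forall>z\<in>Z. spec_le X z s) \<and>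
     (\<forall>u\<in>topspace X. (\<forall>z\<in>Z. spec_le X z u) \<longrightarrow> spec_le X s u)"

definition is_inf :: "'a topology \<Rightarrow> 'a set \<Rightarrow> 'a \<Rightarrow> bool" where
  "is_inf X Z s \<longleftrightarrow> s \<in> topspace X \<and> (\<forall>z\<in>Z. spec_le X s z) \<and>
     (\<forall>u\<in>topspace X. (\<forall>z\<in>Z. spec_le X u z) \<longrightarrow> spec_le X u s)"

definition sup_fin :: "'a topology \<Rightarrow> 'a set \<Rightarrow> 'a set" where
  "sup_fin X Y = {s. \<exists>F. F \<subseteq> Y \<and> F \<noteq> {} \<and> finite F \<and> is_sup X F s}"

definition sup_all :: "'a topology \<Rightarrow> 'a set \<Rightarrow> 'a set" where
  "sup_all X Y = {s. \<exists>Z. Z \<subseteq> Y \<and> Z \<noteq> {} \<and> is_sup X Z s}"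

definition inf_fin :: "'a topology \<Rightarrow> 'a set \<Rightarrow> 'a set" where
  "inf_fin X Y = {s. \<exists>F. F \<subseteq> Y \<and> F \<noteq> {} \<and> finite F \<and> is_inf X F s}"

definition inf_all :: "'a topology \<Rightarrow> 'a set \<Rightarrow> 'a set" where
  "inf_all X Y = {s. \<exists>Z. Z \<subseteq> Y \<and> Z \<noteq> {} \<and> is_inf X Z s}"

text \<open>Constructible topology: coarsest topology in which every open
  quasi-compact set is clopen, i.e. generated by these sets and their complements.\<close>

definition cons_topology :: "'a topology \<Rightarrow> 'a topology" where
  "cons_topology X = topology_generated_by
     ({U. openin X U \<and> compactin X U} \<union> {topspace X - U | U. openin X U \<and> compactin X U})"

end

theory Submission
  imports Defs
begin

text \<open>
  Along a homeomorphism h from X onto Spec R the specialization order becomes inclusion of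
  prime ideals. If the nonempty finite subsets F of Z have suprema p F, these points form a
  directed family, and the union of the primes h (p F) is again prime: its point is sup Z.
  Dually, the infima of finite subsets form a codirected family whose intersection is prime.

  For the closure statements consider the net F \<mapsto> p F on the finite subsets of Z. By
  monotonicity each g \<in> R eventually lies in h (p F) iff it lies in h (sup Z). As every compact
  open subset of Spec R is a finite union of basic open sets D(g), this pointwise convergence is
  convergence in the constructible topology, so sup Z is a limit of points of Y_f.
\<close>

section \<open>Specialization order\<close>

lemma spec_le_trans:
  assumes "spec_le X x y" and "spec_le X y z"
  shows "spec_le X x z"
proof -
  have "X closure_of {y} \<subseteq> X closure_of {x}"
    using assms(1) by (intro closure_of_minimal) (auto simp: spec_le_def)
  then show ?thesis
    using assms by (auto simp: spec_le_def)
qed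

lemma is_sup_mono:
  assumes "is_sup X F a" and "is_sup X G b" and "F \<subseteq> G"
  shows "spec_le X a b"
  using assms unfolding is_sup_def by blast

lemma is_inf_antimono:
  assumes "is_inf X F a" and "is_inf X G b" and "F \<subseteq> G"
  shows "spec_le X b a"
  using assms unfolding is_inf_def by blast

lemma is_sup_of_finite_sups:
  assumes fin: "\<And>F. F \<subseteq> Z \<Longrightarrow> F \<noteq> {} \<Longrightarrow> finite F \<Longrightarrow> is_sup X F (p F)"
    and sup: "is_sup X (p ` {F. F \<subseteq> Z \<and> F \<noteq> {} \<and> finite F}) s"
  shows "is_sup X Z s"
  unfolding is_sup_def
proof (intro conjI ballI impI)
  show "s \<in> topspace X"
    using sup by (simp add: is_sup_def)
next
  fix z assume "z \<in> Z"
  then have "spec_le X z (p {z})" and "spec_le X (p {z}) s"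
    using fin[of "{z}"] sup unfolding is_sup_def by auto
  then show "spec_le X z s"
    by (rule spec_le_trans)
next
  fix u assume u: "u \<in> topspace X" "\<forall>z\<in>Z. spec_le X z u"
  then have "spec_le X (p F) u" if "F \<subseteq> Z" "F \<noteq> {}" "finite F" for F
    using fin[OF that] that(1) unfolding is_sup_def by blast
  then show "spec_le X s u"
    using sup u(1) unfolding is_sup_def by blast
qed

lemma is_inf_of_finite_infs:
  assumes fin: "\<And>F. F \<subseteq> Z \<Longrightarrow> F \<noteq> {} \<Longrightarrow> finite F \<Longrightarrow> is_inf X F (p F)"
    and inf: "is_inf X (p ` {F. F \<subseteq> Z \<and> F \<noteq> {} \<and> finite F}) s"
  shows "is_inf X Z s"
  unfolding is_inf_def
proof (intro conjI ballI impI)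
  show "s \<in> topspace X"
    using inf by (simp add: is_inf_def)
next
  fix z assume "z \<in> Z"
  then have "spec_le X s (p {z})" and "spec_le X (p {z}) z"
    using fin[of "{z}"] inf unfolding is_inf_def by auto
  then show "spec_le X s z"
    by (rule spec_le_trans)
next
  fix u assume u: "u \<in> topspace X" "\<forall>z\<in>Z. spec_le X u z"
  then have "spec_le X u (p F)" if "F \<subseteq> Z" "F \<noteq> {}" "finite F" for F
    using fin[OF that] that(1) unfolding is_inf_def by blast
  then show "spec_le X u s"
    using inf u(1) unfolding is_inf_def by blast
qed

section \<open>Nets of finite subsets and the constructible topology\<close>

lemma eventually_finite_subsets_at_top_superset:
  assumes "finite F0" and "F0 \<subseteq> Z"
  shows "eventually (\<lambda>F. finite F \<and> F0 \<subseteq> F \<and> F \<subseteq> Z) (finite_subsets_at_top Z)"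
  using assms by (auto simp: eventually_finite_subsets_at_top)

lemma eventually_nonempty_finite_subsets_at_top:
  assumes "Z \<noteq> {}"
  shows "eventually (\<lambda>F. F \<subseteq> Z \<and> F \<noteq> {} \<and> finite F) (finite_subsets_at_top Z)"
proof -
  obtain z where "z \<in> Z"
    using assms by blast
  then show ?thesis
    using eventually_finite_subsets_at_top_superset[of "{z}" Z] by (auto elim: eventually_mono)
qed

lemma limitin_topology_generated_by:
  assumes "l \<in> \<Union>S" and "\<And>U. U \<in> S \<Longrightarrow> l \<in> U \<Longrightarrow> eventually (\<lambda>x. f x \<in> U) F"
  shows "limitin (topology_generated_by S) f l F"
proof -
  have "l \<in> U \<longrightarrow> eventually (\<lambda>x. f x \<in> U) F" if "generate_topology_on S U" for U
    using that
  proof (induction rule: generate_topology_on.induct)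
    case (Int a b)
    then show ?case by (auto intro: eventually_conj)
  next
    case (UN K)
    show ?case
    proof
      assume "l \<in> \<Union>K"
      then obtain k where "k \<in> K" "l \<in> k"
        by blast
      then have "eventually (\<lambda>x. f x \<in> k) F"
        using UN.IH by blast
      then show "eventually (\<lambda>x. f x \<in> \<Union>K) F"
        by (rule eventually_mono) (use \<open>k \<in> K\<close> in blast)
    qed
  qed (use assms(2) in auto)
  then show ?thesis
    using assms(1) by (auto simp: limitin_def openin_topology_generated_by_iff)
qed

lemma topspace_cons_topology [simp]: "topspace (cons_topology X) = topspace X"
proof -
  have "topspace X \<in> {topspace X - U | U. openin X U \<and> compactin X U}"
    by (rule CollectI, rule exI[of _ "{}"]) simp
  then show ?thesis
    unfolding cons_topology_def topology_generated_by_topspace using openin_subset by blast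
qed

lemma limitin_cons_topologyI:
  assumes "l \<in> topspace X" and "eventually (\<lambda>i. f i \<in> topspace X) F"
    and "\<And>U. openin X U \<Longrightarrow> compactin X U \<Longrightarrow> eventually (\<lambda>i. f i \<in> U \<longleftrightarrow> l \<in> U) F"
  shows "limitin (cons_topology X) f l F"
  unfolding cons_topology_def
proof (rule limitin_topology_generated_by)
  show "l \<in> \<Union>({U. openin X U \<and> compactin X U} \<union> {topspace X - U | U. openin X U \<and> compactin X U})"
    using assms(1) topspace_cons_topology[of X]
    unfolding cons_topology_def topology_generated_by_topspace by simp
next
  fix W assume "W \<in> {U. openin X U \<and> compactin X U} \<union> {topspace X - U | U. openin X U \<and> compactin X U}"
    and "l \<in> W"
  then consider U where "openin X U" "compactin X U" "W = U" "l \<in> U"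
    | U where "openin X U" "compactin X U" "W = topspace X - U" "l \<notin> U"
    by blast
  then show "eventually (\<lambda>i. f i \<in> W) F"
  proof cases
    case 1
    then show ?thesis using assms(3)[of U] by (auto elim: eventually_mono)
  next
    case 2
    then show ?thesis using eventually_conj[OF assms(2) assms(3)[of U]] by (auto elim: eventually_mono)
  qed
qed

section \<open>Prime ideals\<close>

lemma (in ring) ideal_Union_directed:
  assumes "II \<noteq> {}" and ideals: "\<And>I. I \<in> II \<Longrightarrow> ideal I R"
    and directed: "\<And>I J. I \<in> II \<Longrightarrow> J \<in> II \<Longrightarrow> \<exists>K\<in>II. I \<subseteq> K \<and> J \<subseteq> K"
  shows "ideal (\<Union>II) R"
proof (rule idealI[OF ring_axioms])
  show "subgroup (\<Union>II) (add_monoid R)"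
  proof
    show "\<Union>II \<subseteq> carrier (add_monoid R)"
      using ideals ideal.Icarr by fastforce
    obtain I where "I \<in> II"
      using assms(1) by blast
    then show "\<one>\<^bsub>add_monoid R\<^esub> \<in> \<Union>II"
      using additive_subgroup.zero_closed[OF ideal.axioms(1)[OF ideals]] by auto
  next
    fix x y assume "x \<in> \<Union>II" "y \<in> \<Union>II"
    then obtain I J where "I \<in> II" "J \<in> II" "x \<in> I" "y \<in> J"
      by blast
    then obtain K where K: "K \<in> II" "x \<in> K" "y \<in> K"
      using directed by blast
    then show "x \<otimes>\<^bsub>add_monoid R\<^esub> y \<in> \<Union>II"
      using additive_subgroup.a_closed[OF ideal.axioms(1)[OF ideals[OF K(1)]]] by auto
  next
    fix x assume "x \<in> \<Union>II"
    then obtain I where I: "I \<in> II" "x \<in> I"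
      by blast
    then show "inv\<^bsub>add_monoid R\<^esub> x \<in> \<Union>II"
      using additive_subgroup.a_inv_closed[OF ideal.axioms(1)[OF ideals[OF I(1)]]]
      unfolding a_inv_def by auto
  qed
next
  fix a x assume "a \<in> \<Union>II" and x: "x \<in> carrier R"
  then obtain I where I: "I \<in> II" "a \<in> I"
    by blast
  then show "x \<otimes> a \<in> \<Union>II" and "a \<otimes> x \<in> \<Union>II"
    using ideal.I_l_closed[OF ideals[OF I(1)] I(2) x] ideal.I_r_closed[OF ideals[OF I(1)] I(2) x]
    by auto
qed

lemma primeideal_not_one:
  fixes R (structure)
  assumes "primeideal P R"
  shows "\<one> \<notin> P"
  using assms ideal.one_imp_carrier primeideal.I_notcarr primeideal.axioms(1) by metis

lemma primeideal_Union_directed: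
  fixes R (structure)
  assumes "cring R" and "PP \<noteq> {}" and primes: "\<And>P. P \<in> PP \<Longrightarrow> primeideal P R"
    and directed: "\<And>P Q. P \<in> PP \<Longrightarrow> Q \<in> PP \<Longrightarrow> \<exists>M\<in>PP. P \<subseteq> M \<and> Q \<subseteq> M"
  shows "primeideal (\<Union>PP) R"
proof (rule primeidealI[OF _ assms(1)])
  interpret cring R by fact
  show "ideal (\<Union>PP) R"
    using ideal_Union_directed[OF assms(2) primeideal.axioms(1)[OF primes] directed] .
  show "carrier R \<noteq> \<Union>PP"
  proof
    assume "carrier R = \<Union>PP"
    then obtain P where "P \<in> PP" "\<one> \<in> P"
      using one_closed by blast
    then show False
      using primes primeideal_not_one by blast
  qed
next
  fix a b assume ab: "a \<in> carrier R" "b \<in> carrier R" "a \<otimes> b \<in> \<Union>PP"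
  then obtain P where "P \<in> PP" "a \<otimes> b \<in> P"
    by blast
  then show "a \<in> \<Union>PP \<or> b \<in> \<Union>PP"
    using primeideal.I_prime[OF primes ab(1,2)] by blast
qed

lemma primeideal_Inter_codirected:
  fixes R (structure)
  assumes "cring R" and "PP \<noteq> {}" and primes: "\<And>P. P \<in> PP \<Longrightarrow> primeideal P R"
    and codirected: "\<And>P Q. P \<in> PP \<Longrightarrow> Q \<in> PP \<Longrightarrow> \<exists>M\<in>PP. M \<subseteq> P \<and> M \<subseteq> Q"
  shows "primeideal (\<Inter>PP) R"
proof (rule primeidealI[OF _ assms(1)])
  interpret cring R by fact
  show "ideal (\<Inter>PP) R"
    using i_Intersect[OF primeideal.axioms(1)[OF primes] assms(2)] .
  show "carrier R \<noteq> \<Inter>PP"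
    using assms(2) one_closed primes primeideal_not_one by blast
next
  fix a b assume ab: "a \<in> carrier R" "b \<in> carrier R" "a \<otimes> b \<in> \<Inter>PP"
  show "a \<in> \<Inter>PP \<or> b \<in> \<Inter>PP"
  proof (rule ccontr)
    assume "\<not> ?thesis"
    then obtain P Q where PQ: "P \<in> PP" "Q \<in> PP" "a \<notin> P" "b \<notin> Q"
      by blast
    then obtain M where M: "M \<in> PP" "M \<subseteq> P" "M \<subseteq> Q"
      using codirected by blast
    have "a \<in> M \<or> b \<in> M"
      using primeideal.I_prime[OF primes[OF M(1)] ab(1,2)] ab(3) M(1) by blast
    then show False
      using M PQ by blast
  qed
qed

lemma (in primeideal) mult_mem_iff:
  assumes "a \<in> carrier R" and "b \<in> carrier R"
  shows "a \<otimes> b \<in> I \<longleftrightarrow> a \<in> I \<or> b \<in> I"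
proof
  assume "a \<otimes> b \<in> I"
  then show "a \<in> I \<or> b \<in> I"
    by (rule I_prime[OF assms])
next
  assume "a \<in> I \<or> b \<in> I"
  then show "a \<otimes> b \<in> I"
    using I_r_closed[of a b] I_l_closed[of b a] assms by auto
qed

section \<open>The Zariski topology\<close>

lemma topspace_zariski:
  fixes R (structure)
  assumes "cring R"
  shows "topspace (zariski R) = Spec R"
proof -
  interpret cring R by fact
  have "P \<in> {Q \<in> Spec R. \<one> \<notin> Q}" if "P \<in> Spec R" for P
    using that primeideal_not_one by (auto simp: Spec_def)
  then show ?thesis
    unfolding zariski_def topology_generated_by_topspace by blast
qed

lemma openin_zariski_basic:
  assumes "g \<in> carrier R"
  shows "openin (zariski R) {P \<in> Spec R. g \<notin> P}"
  unfolding zariski_def by (rule topology_generated_by_Basis) (use assms in blast)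

lemma openin_zariski_basic_neighbourhood:
  fixes R (structure)
  assumes "cring R" and "openin (zariski R) W" and "Q \<in> W"
  shows "\<exists>g\<in>carrier R. g \<notin> Q \<and> {P \<in> Spec R. g \<notin> P} \<subseteq> W"
proof -
  interpret cring R by fact
  have "generate_topology_on {{P \<in> Spec R. f \<notin> P} | f. f \<in> carrier R} W"
    using assms(2) unfolding zariski_def by (rule openin_topology_generated_by)
  then have "\<forall>Q\<in>W. Q \<in> Spec R \<longrightarrow> (\<exists>g\<in>carrier R. g \<notin> Q \<and> {P \<in> Spec R. g \<notin> P} \<subseteq> W)"
  proof (induction rule: generate_topology_on.induct)
    case Empty
    then show ?case by simp
  next
    case (Int a b)
    show ?case
    proof (intro ballI impI)
      fix Q assume Q: "Q \<in> a \<inter> b" "Q \<in> Spec R"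
      then obtain f where f: "f \<in> carrier R" "f \<notin> Q" "{P \<in> Spec R. f \<notin> P} \<subseteq> a"
        using Int.IH(1) by blast
      obtain g where g: "g \<in> carrier R" "g \<notin> Q" "{P \<in> Spec R. g \<notin> P} \<subseteq> b"
        using Int.IH(2) Q by blast
      have prod: "f \<otimes> g \<notin> P \<longleftrightarrow> f \<notin> P \<and> g \<notin> P" if "P \<in> Spec R" for P
        using primeideal.mult_mem_iff[of P R f g] that f(1) g(1) by (simp add: Spec_def)
      then have "{P \<in> Spec R. f \<otimes> g \<notin> P} \<subseteq> a \<inter> b"
        using f(3) g(3) by blast
      moreover have "f \<otimes> g \<notin> Q"
        using prod Q(2) f(2) g(2) by blast
      ultimately show "\<exists>h\<in>carrier R. h \<notin> Q \<and> {P \<in> Spec R. h \<notin> P} \<subseteq> a \<inter> b"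
        using m_closed[OF f(1) g(1)] by blast
    qed
  next
    case (UN K)
    show ?case
    proof (intro ballI impI)
      fix Q assume "Q \<in> \<Union>K" "Q \<in> Spec R"
      then obtain k where "k \<in> K" "Q \<in> k"
        by blast
      then show "\<exists>g\<in>carrier R. g \<notin> Q \<and> {P \<in> Spec R. g \<notin> P} \<subseteq> \<Union>K"
        using UN.IH \<open>Q \<in> Spec R\<close> by blast
    qed
  next
    case (Basis s)
    then obtain f where "f \<in> carrier R" "s = {P \<in> Spec R. f \<notin> P}"
      by blast
    then show ?case
      by blast
  qed
  moreover have "Q \<in> Spec R"
    using openin_subset[OF assms(2)] assms(3) topspace_zariski[OF assms(1)] by blast
  ultimately show ?thesis
    using assms(3) by blast
qed

section \<open>Spaces homeomorphic to a prime spectrum\<close>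

locale zariski_homeomorphism =
  fixes X :: "'a topology" and R :: "('b, 'c) ring_scheme" (structure) and h :: "'a \<Rightarrow> 'b set"
  assumes cring: "cring R"
    and homeomorphic: "homeomorphic_map X (zariski R) h"
begin

definition basic_open :: "'b \<Rightarrow> 'a set" where
  "basic_open g = {x \<in> topspace X. g \<notin> h x}"

lemma image_topspace: "h ` topspace X = Spec R"
  using homeomorphic_imp_surjective_map[OF homeomorphic] topspace_zariski[OF cring] by simp

lemma primeideal_image: "x \<in> topspace X \<Longrightarrow> primeideal (h x) R"
  using image_topspace by (auto simp: Spec_def)

lemma primeideal_imp_image:
  assumes "primeideal P R"
  obtains x where "x \<in> topspace X" "h x = P"
proof -
  have "P \<in> h ` topspace X"
    using assms image_topspace by (simp add: Spec_def)
  then show thesis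
    using that by blast
qed

lemma openin_basic_open:
  assumes "g \<in> carrier R"
  shows "openin X (basic_open g)"
proof -
  have "basic_open g = {x \<in> topspace X. h x \<in> {P \<in> Spec R. g \<notin> P}}"
    using image_topspace by (auto simp: basic_open_def)
  then show ?thesis
    using openin_continuous_map_preimage[OF homeomorphic_imp_continuous_map[OF homeomorphic]
        openin_zariski_basic[OF assms]] by simp
qed

lemma openin_basic_neighbourhood:
  assumes "openin X U" and "x \<in> U"
  obtains g where "g \<in> carrier R" "x \<in> basic_open g" "basic_open g \<subseteq> U"
proof -
  have U: "U \<subseteq> topspace X"
    using assms(1) by (rule openin_subset)
  then have "openin (zariski R) (h ` U)"
    using homeomorphic_map_openness[OF homeomorphic] assms(1) by simp
  then obtain g where g: "g \<in> carrier R" "g \<notin> h x" "{P \<in> Spec R. g \<notin> P} \<subseteq> h ` U"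
    using openin_zariski_basic_neighbourhood[OF cring] assms(2) by blast
  have "basic_open g \<subseteq> U"
  proof
    fix y assume y: "y \<in> basic_open g"
    then have "h y \<in> h ` U"
      using g(3) image_topspace by (auto simp: basic_open_def)
    then obtain u where "u \<in> U" "h y = h u"
      by blast
    then show "y \<in> U"
      using y U homeomorphic_imp_injective_map[OF homeomorphic]
      by (auto simp: basic_open_def inj_on_def)
  qed
  moreover have "x \<in> basic_open g"
    using g(2) assms(2) U by (auto simp: basic_open_def)
  ultimately show thesis
    using that g(1) by blast
qed

lemma spec_le_iff: "spec_le X x y \<longleftrightarrow> x \<in> topspace X \<and> y \<in> topspace X \<and> h x \<subseteq> h y"
proof (cases "x \<in> topspace X \<and> y \<in> topspace X")
  case False
  then show ?thesis
    by (auto simp: spec_le_def in_closure_of)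
next
  case True
  have "y \<in> X closure_of {x} \<longleftrightarrow> (\<forall>U. openin X U \<and> y \<in> U \<longrightarrow> x \<in> U)"
    using True by (auto simp: in_closure_of)
  also have "\<dots> \<longleftrightarrow> (\<forall>g\<in>carrier R. y \<in> basic_open g \<longrightarrow> x \<in> basic_open g)"
    by (meson openin_basic_open openin_basic_neighbourhood subsetD)
  also have "\<dots> \<longleftrightarrow> h x \<subseteq> h y"
    using True ideal.Icarr[OF primeideal.axioms(1)[OF primeideal_image]]
    by (auto simp: basic_open_def)
  finally show ?thesis
    using True by (simp add: spec_le_def)
qed

lemma compactin_openin_imp_finite_basic:
  assumes "openin X U" and "compactin X U"
  obtains G where "finite G" "G \<subseteq> carrier R" "U = (\<Union>g\<in>G. basic_open g)"
proof -
  let ?C = "{g \<in> carrier R. basic_open g \<subseteq> U}"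
  have "(\<forall>V\<in>basic_open ` ?C. openin X V) \<and> U \<subseteq> \<Union>(basic_open ` ?C) \<longrightarrow>
      (\<exists>\<F>. finite \<F> \<and> \<F> \<subseteq> basic_open ` ?C \<and> U \<subseteq> \<Union>\<F>)"
    using assms(2) unfolding compactin_def by (rule conjunct2[THEN spec])
  moreover have "\<forall>V\<in>basic_open ` ?C. openin X V"
    using openin_basic_open by blast
  moreover have "U \<subseteq> \<Union>(basic_open ` ?C)"
  proof
    fix x assume "x \<in> U"
    then obtain g where "g \<in> carrier R" "x \<in> basic_open g" "basic_open g \<subseteq> U"
      by (rule openin_basic_neighbourhood[OF assms(1)])
    then show "x \<in> \<Union>(basic_open ` ?C)"
      by blast
  qed
  ultimately obtain \<F> where \<F>: "finite \<F>" "\<F> \<subseteq> basic_open ` ?C" "U \<subseteq> \<Union>\<F>"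
    by blast
  then obtain G where G: "G \<subseteq> ?C" "finite G" "\<F> = basic_open ` G"
    using finite_subset_image[OF \<F>(1,2)] by blast
  have "U = (\<Union>g\<in>G. basic_open g)"
    using \<F>(3) G by blast
  moreover have "G \<subseteq> carrier R"
    using G(1) by blast
  ultimately show thesis
    using that G(2) by blast
qed

lemma limitin_cons_topology_pointwise:
  assumes "s \<in> topspace X" and "eventually (\<lambda>i. p i \<in> topspace X) F"
    and "\<And>g. g \<in> carrier R \<Longrightarrow> eventually (\<lambda>i. g \<in> h (p i) \<longleftrightarrow> g \<in> h s) F"
  shows "limitin (cons_topology X) p s F"
proof (rule limitin_cons_topologyI[OF assms(1,2)])
  fix U assume "openin X U" and "compactin X U"
  then obtain G where G: "finite G" "G \<subseteq> carrier R" "U = (\<Union>g\<in>G. basic_open g)"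
    by (rule compactin_openin_imp_finite_basic)
  have "eventually (\<lambda>i. \<forall>g\<in>G. g \<in> h (p i) \<longleftrightarrow> g \<in> h s) F"
    using G(2) assms(3) by (intro eventually_ball_finite[OF G(1)]) blast
  with assms(2) show "eventually (\<lambda>i. p i \<in> U \<longleftrightarrow> s \<in> U) F"
    by eventually_elim (use G(3) assms(1) in \<open>auto simp: basic_open_def\<close>)
qed

lemma is_sup_unique:
  assumes "is_sup X Z s" and "is_sup X Z t"
  shows "s = t"
proof -
  have "h s = h t" and "s \<in> topspace X" and "t \<in> topspace X"
    using assms unfolding is_sup_def spec_le_iff by blast+
  then show ?thesis
    using homeomorphic_imp_injective_map[OF homeomorphic] by (auto simp: inj_on_def)
qed

lemma is_inf_unique:
  assumes "is_inf X Z s" and "is_inf X Z t"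
  shows "s = t"
proof -
  have "h s = h t" and "s \<in> topspace X" and "t \<in> topspace X"
    using assms unfolding is_inf_def spec_le_iff by blast+
  then show ?thesis
    using homeomorphic_imp_injective_map[OF homeomorphic] by (auto simp: inj_on_def)
qed

lemma is_sup_directed:
  assumes "D \<subseteq> topspace X" and "D \<noteq> {}"
    and directed: "\<And>a b. a \<in> D \<Longrightarrow> b \<in> D \<Longrightarrow> \<exists>c\<in>D. h a \<subseteq> h c \<and> h b \<subseteq> h c"
  obtains s where "is_sup X D s" "h s = \<Union>(h ` D)"
proof -
  have "primeideal (\<Union>(h ` D)) R"
  proof (rule primeideal_Union_directed[OF cring])
    show "h ` D \<noteq> {}" and "\<And>P. P \<in> h ` D \<Longrightarrow> primeideal P R"
      using assms(1,2) primeideal_image by auto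
    fix P Q assume "P \<in> h ` D" "Q \<in> h ` D"
    then obtain a b where "a \<in> D" "b \<in> D" "P = h a" "Q = h b"
      by blast
    then show "\<exists>M\<in>h ` D. P \<subseteq> M \<and> Q \<subseteq> M"
      using directed[of a b] by blast
  qed
  then obtain s where s: "s \<in> topspace X" "h s = \<Union>(h ` D)"
    by (rule primeideal_imp_image)
  then have "is_sup X D s"
    using assms(1) by (auto simp: is_sup_def spec_le_iff)
  then show thesis
    using that s(2) by blast
qed

lemma is_inf_codirected:
  assumes "D \<subseteq> topspace X" and "D \<noteq> {}"
    and codirected: "\<And>a b. a \<in> D \<Longrightarrow> b \<in> D \<Longrightarrow> \<exists>c\<in>D. h c \<subseteq> h a \<and> h c \<subseteq> h b"
  obtains s where "is_inf X D s" "h s = \<Inter>(h ` D)"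
proof -
  have "primeideal (\<Inter>(h ` D)) R"
  proof (rule primeideal_Inter_codirected[OF cring])
    show "h ` D \<noteq> {}" and "\<And>P. P \<in> h ` D \<Longrightarrow> primeideal P R"
      using assms(1,2) primeideal_image by auto
    fix P Q assume "P \<in> h ` D" "Q \<in> h ` D"
    then obtain a b where "a \<in> D" "b \<in> D" "P = h a" "Q = h b"
      by blast
    then show "\<exists>M\<in>h ` D. M \<subseteq> P \<and> M \<subseteq> Q"
      using codirected[of a b] by blast
  qed
  then obtain s where s: "s \<in> topspace X" "h s = \<Inter>(h ` D)"
    by (rule primeideal_imp_image)
  then have "is_inf X D s"
    using assms(1) by (auto simp: is_inf_def spec_le_iff)
  then show thesis
    using that s(2) by blast
qed

lemma sup_of_finite_sups:
  assumes "Z \<noteq> {}" and fin: "\<And>F. F \<subseteq> Z \<Longrightarrow> F \<noteq> {} \<Longrightarrow> finite F \<Longrightarrow> is_sup X F (p F)"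
  obtains s where "is_sup X Z s" "h s = (\<Union>F\<in>{F. F \<subseteq> Z \<and> F \<noteq> {} \<and> finite F}. h (p F))"
proof -
  let ?D = "p ` {F. F \<subseteq> Z \<and> F \<noteq> {} \<and> finite F}"
  have "?D \<subseteq> topspace X"
    using fin by (auto simp: is_sup_def)
  moreover have "?D \<noteq> {}"
  proof -
    obtain z where "z \<in> Z"
      using assms(1) by blast
    then have "p {z} \<in> ?D"
      by (intro imageI) auto
    then show ?thesis
      by (metis empty_iff)
  qed
  moreover have "\<exists>c\<in>?D. h a \<subseteq> h c \<and> h b \<subseteq> h c" if a: "a \<in> ?D" and b: "b \<in> ?D" for a b
  proof -
    obtain F where F: "F \<subseteq> Z" "F \<noteq> {}" "finite F" "a = p F"
      using a by blast
    obtain G where G: "G \<subseteq> Z" "G \<noteq> {}" "finite G" "b = p G"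
      using b by blast
    have FG: "F \<union> G \<subseteq> Z" "F \<union> G \<noteq> {}" "finite (F \<union> G)"
      using F G by auto
    have "spec_le X a (p (F \<union> G))" and "spec_le X b (p (F \<union> G))"
      using is_sup_mono[OF fin[OF F(1-3)] fin[OF FG]] is_sup_mono[OF fin[OF G(1-3)] fin[OF FG]]
        F(4) G(4) by auto
    moreover have "p (F \<union> G) \<in> ?D"
      using F G by (intro imageI) auto
    ultimately show ?thesis
      unfolding spec_le_iff by blast
  qed
  ultimately obtain s where s: "is_sup X ?D s" "h s = \<Union>(h ` ?D)"
    by (rule is_sup_directed)
  have "is_sup X Z s"
    using fin s(1) by (rule is_sup_of_finite_sups)
  then show thesis
    using that s(2) by (simp add: image_image)
qed

lemma inf_of_finite_infs:
  assumes "Z \<noteq> {}" and fin: "\<And>F. F \<subseteq> Z \<Longrightarrow> F \<noteq> {} \<Longrightarrow> finite F \<Longrightarrow> is_inf X F (p F)"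
  obtains s where "is_inf X Z s" "h s = (\<Inter>F\<in>{F. F \<subseteq> Z \<and> F \<noteq> {} \<and> finite F}. h (p F))"
proof -
  let ?D = "p ` {F. F \<subseteq> Z \<and> F \<noteq> {} \<and> finite F}"
  have "?D \<subseteq> topspace X"
    using fin by (auto simp: is_inf_def)
  moreover have "?D \<noteq> {}"
  proof -
    obtain z where "z \<in> Z"
      using assms(1) by blast
    then have "p {z} \<in> ?D"
      by (intro imageI) auto
    then show ?thesis
      by (metis empty_iff)
  qed
  moreover have "\<exists>c\<in>?D. h c \<subseteq> h a \<and> h c \<subseteq> h b" if a: "a \<in> ?D" and b: "b \<in> ?D" for a b
  proof -
    obtain F where F: "F \<subseteq> Z" "F \<noteq> {}" "finite F" "a = p F"
      using a by blast
    obtain G where G: "G \<subseteq> Z" "G \<noteq> {}" "finite G" "b = p G"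
      using b by blast
    have FG: "F \<union> G \<subseteq> Z" "F \<union> G \<noteq> {}" "finite (F \<union> G)"
      using F G by auto
    have "spec_le X (p (F \<union> G)) a" and "spec_le X (p (F \<union> G)) b"
      using is_inf_antimono[OF fin[OF F(1-3)] fin[OF FG]] is_inf_antimono[OF fin[OF G(1-3)] fin[OF FG]]
        F(4) G(4) by auto
    moreover have "p (F \<union> G) \<in> ?D"
      using F G by (intro imageI) auto
    ultimately show ?thesis
      unfolding spec_le_iff by blast
  qed
  ultimately obtain s where s: "is_inf X ?D s" "h s = \<Inter>(h ` ?D)"
    by (rule is_inf_codirected)
  have "is_inf X Z s"
    using fin s(1) by (rule is_inf_of_finite_infs)
  then show thesis
    using that s(2) by (simp add: image_image)
qed

lemma limitin_finite_sups:
  assumes "Z \<noteq> {}" and fin: "\<And>F. F \<subseteq> Z \<Longrightarrow> F \<noteq> {} \<Longrightarrow> finite F \<Longrightarrow> is_sup X F (p F)"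
    and sup: "is_sup X Z s"
  shows "limitin (cons_topology X) p s (finite_subsets_at_top Z)"
proof -
  obtain s' where "is_sup X Z s'" and "h s' = (\<Union>F\<in>{F. F \<subseteq> Z \<and> F \<noteq> {} \<and> finite F}. h (p F))"
    using sup_of_finite_sups[OF assms(1) fin] by blast
  then have hs: "h s = (\<Union>F\<in>{F. F \<subseteq> Z \<and> F \<noteq> {} \<and> finite F}. h (p F))"
    using is_sup_unique[OF sup] by simp
  show ?thesis
  proof (rule limitin_cons_topology_pointwise)
    show "s \<in> topspace X"
      using sup by (simp add: is_sup_def)
    show "eventually (\<lambda>F. p F \<in> topspace X) (finite_subsets_at_top Z)"
      using eventually_nonempty_finite_subsets_at_top[OF assms(1)]
      by (rule eventually_mono) (use fin in \<open>auto simp: is_sup_def\<close>)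
  next
    fix g
    show "eventually (\<lambda>F. g \<in> h (p F) \<longleftrightarrow> g \<in> h s) (finite_subsets_at_top Z)"
    proof (cases "g \<in> h s")
      case True
      then obtain F0 where F0: "F0 \<subseteq> Z" "F0 \<noteq> {}" "finite F0" "g \<in> h (p F0)"
        using hs by blast
      have mono: "h (p F0) \<subseteq> h (p F)" if F: "finite F" "F0 \<subseteq> F" "F \<subseteq> Z" for F
      proof -
        have "F \<noteq> {}"
          using F(2) F0(2) by blast
        then show ?thesis
          using is_sup_mono[OF fin[OF F0(1-3)] fin[OF F(3) _ F(1)] F(2)] unfolding spec_le_iff by blast
      qed
      from eventually_finite_subsets_at_top_superset[OF F0(3,1)] show ?thesis
        by (rule eventually_mono) (use mono True F0(4) in blast)
    next
      case False
      from eventually_nonempty_finite_subsets_at_top[OF assms(1)] show ?thesis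
        by eventually_elim (use False hs in blast)
    qed
  qed
qed

lemma limitin_finite_infs:
  assumes "Z \<noteq> {}" and fin: "\<And>F. F \<subseteq> Z \<Longrightarrow> F \<noteq> {} \<Longrightarrow> finite F \<Longrightarrow> is_inf X F (p F)"
    and inf: "is_inf X Z s"
  shows "limitin (cons_topology X) p s (finite_subsets_at_top Z)"
proof -
  obtain s' where "is_inf X Z s'" and "h s' = (\<Inter>F\<in>{F. F \<subseteq> Z \<and> F \<noteq> {} \<and> finite F}. h (p F))"
    using inf_of_finite_infs[OF assms(1) fin] by blast
  then have hs: "h s = (\<Inter>F\<in>{F. F \<subseteq> Z \<and> F \<noteq> {} \<and> finite F}. h (p F))"
    using is_inf_unique[OF inf] by simp
  show ?thesis
  proof (rule limitin_cons_topology_pointwise)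
    show "s \<in> topspace X"
      using inf by (simp add: is_inf_def)
    show "eventually (\<lambda>F. p F \<in> topspace X) (finite_subsets_at_top Z)"
      using eventually_nonempty_finite_subsets_at_top[OF assms(1)]
      by (rule eventually_mono) (use fin in \<open>auto simp: is_inf_def\<close>)
  next
    fix g
    show "eventually (\<lambda>F. g \<in> h (p F) \<longleftrightarrow> g \<in> h s) (finite_subsets_at_top Z)"
    proof (cases "g \<in> h s")
      case True
      from eventually_nonempty_finite_subsets_at_top[OF assms(1)] show ?thesis
        by eventually_elim (use True hs in blast)
    next
      case False
      then obtain F0 where F0: "F0 \<subseteq> Z" "F0 \<noteq> {}" "finite F0" "g \<notin> h (p F0)"
        using hs by blast
      have antimono: "h (p F) \<subseteq> h (p F0)" if F: "finite F" "F0 \<subseteq> F" "F \<subseteq> Z" for F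
      proof -
        have "F \<noteq> {}"
          using F(2) F0(2) by blast
        then show ?thesis
          using is_inf_antimono[OF fin[OF F0(1-3)] fin[OF F(3) _ F(1)] F(2)] unfolding spec_le_iff by blast
      qed
      from eventually_finite_subsets_at_top_superset[OF F0(3,1)] show ?thesis
        by (rule eventually_mono) (use antimono False F0(4) in blast)
    qed
  qed
qed

lemma sups_exist_and_sup_all_subset_cons_closure:
  assumes "Y \<subseteq> topspace X"
    and finite_sups: "\<forall>F. F \<subseteq> Y \<and> F \<noteq> {} \<and> finite F \<longrightarrow> (\<exists>s. is_sup X F s)"
  shows "(\<forall>Z. Z \<subseteq> Y \<and> Z \<noteq> {} \<longrightarrow> (\<exists>s. is_sup X Z s)) \<and>
    sup_all X Y \<subseteq> cons_topology X closure_of sup_fin X Y"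
proof -
  define p where "p F = (SOME s. is_sup X F s)" for F
  have p: "is_sup X F (p F)" if "F \<subseteq> Y" "F \<noteq> {}" "finite F" for F
  proof -
    have "\<exists>s. is_sup X F s"
      using finite_sups that by blast
    then show ?thesis
      unfolding p_def by (rule someI_ex)
  qed
  have p_sub: "is_sup X F (p F)" if "Z \<subseteq> Y" "F \<subseteq> Z" "F \<noteq> {}" "finite F" for Z F
    using p that by blast
  have "\<exists>s. is_sup X Z s" if Z: "Z \<subseteq> Y" "Z \<noteq> {}" for Z
  proof -
    obtain s where "is_sup X Z s"
      using p_sub[OF Z(1)] by (rule sup_of_finite_sups[OF Z(2)])
    then show ?thesis
      by blast
  qed
  moreover have "s \<in> cons_topology X closure_of sup_fin X Y" if s: "s \<in> sup_all X Y" for s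
  proof -
    obtain Z where Z: "Z \<subseteq> Y" "Z \<noteq> {}" "is_sup X Z s"
      using s by (auto simp: sup_all_def)
    have lim: "limitin (cons_topology X) p s (finite_subsets_at_top Z)"
      using Z(2) p_sub[OF Z(1)] Z(3) by (rule limitin_finite_sups)
    have p_fin: "p F \<in> sup_fin X Y" if "F \<subseteq> Z" "F \<noteq> {}" "finite F" for F
      unfolding sup_fin_def using p_sub[OF Z(1) that] that Z(1) by blast
    have closure: "sup_fin X Y \<subseteq> cons_topology X closure_of sup_fin X Y"
      by (rule closure_of_subset) (auto simp: sup_fin_def is_sup_def)
    have "eventually (\<lambda>F. p F \<in> cons_topology X closure_of sup_fin X Y) (finite_subsets_at_top Z)"
      using eventually_nonempty_finite_subsets_at_top[OF Z(2)]
      by (rule eventually_mono) (use p_fin closure in blast)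
    then show ?thesis
      using limitin_closedin[OF lim closedin_closure_of] by simp
  qed
  ultimately show ?thesis
    by blast
qed

lemma infs_exist_and_inf_all_subset_cons_closure:
  assumes "Y \<subseteq> topspace X"
    and finite_infs: "\<forall>F. F \<subseteq> Y \<and> F \<noteq> {} \<and> finite F \<longrightarrow> (\<exists>s. is_inf X F s)"
  shows "(\<forall>Z. Z \<subseteq> Y \<and> Z \<noteq> {} \<longrightarrow> (\<exists>s. is_inf X Z s)) \<and>
    inf_all X Y \<subseteq> cons_topology X closure_of inf_fin X Y"
proof -
  define p where "p F = (SOME s. is_inf X F s)" for F
  have p: "is_inf X F (p F)" if "F \<subseteq> Y" "F \<noteq> {}" "finite F" for F
  proof -
    have "\<exists>s. is_inf X F s"
      using finite_infs that by blast
    then show ?thesis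
      unfolding p_def by (rule someI_ex)
  qed
  have p_sub: "is_inf X F (p F)" if "Z \<subseteq> Y" "F \<subseteq> Z" "F \<noteq> {}" "finite F" for Z F
    using p that by blast
  have "\<exists>s. is_inf X Z s" if Z: "Z \<subseteq> Y" "Z \<noteq> {}" for Z
  proof -
    obtain s where "is_inf X Z s"
      using p_sub[OF Z(1)] by (rule inf_of_finite_infs[OF Z(2)])
    then show ?thesis
      by blast
  qed
  moreover have "s \<in> cons_topology X closure_of inf_fin X Y" if s: "s \<in> inf_all X Y" for s
  proof -
    obtain Z where Z: "Z \<subseteq> Y" "Z \<noteq> {}" "is_inf X Z s"
      using s by (auto simp: inf_all_def)
    have lim: "limitin (cons_topology X) p s (finite_subsets_at_top Z)"
      using Z(2) p_sub[OF Z(1)] Z(3) by (rule limitin_finite_infs)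
    have p_fin: "p F \<in> inf_fin X Y" if "F \<subseteq> Z" "F \<noteq> {}" "finite F" for F
      unfolding inf_fin_def using p_sub[OF Z(1) that] that Z(1) by blast
    have closure: "inf_fin X Y \<subseteq> cons_topology X closure_of inf_fin X Y"
      by (rule closure_of_subset) (auto simp: inf_fin_def is_inf_def)
    have "eventually (\<lambda>F. p F \<in> cons_topology X closure_of inf_fin X Y) (finite_subsets_at_top Z)"
      using eventually_nonempty_finite_subsets_at_top[OF Z(2)]
      by (rule eventually_mono) (use p_fin closure in blast)
    then show ?thesis
      using limitin_closedin[OF lim closedin_closure_of] by simp
  qed
  ultimately show ?thesis
    by blast
qed

end

theorem theorem3p1:
  fixes X :: "'a topology" and R :: "('b, 'c) ring_scheme" and Y :: "'a set"
  assumes "cring R"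
    and "X homeomorphic_space zariski R"
    and "Y \<subseteq> topspace X"
  shows "((\<forall>F. F \<subseteq> Y \<and> F \<noteq> {} \<and> finite F \<longrightarrow> (\<exists>s. is_sup X F s)) \<longrightarrow>
           (\<forall>Z. Z \<subseteq> Y \<and> Z \<noteq> {} \<longrightarrow> (\<exists>s. is_sup X Z s)) \<and>
           sup_all X Y \<subseteq> (cons_topology X) closure_of (sup_fin X Y))
       \<and> ((\<forall>F. F \<subseteq> Y \<and> F \<noteq> {} \<and> finite F \<longrightarrow> (\<exists>s. is_inf X F s)) \<longrightarrow>
           (\<forall>Z. Z \<subseteq> Y \<and> Z \<noteq> {} \<longrightarrow> (\<exists>s. is_inf X Z s)) \<and>
           inf_all X Y \<subseteq> (cons_topology X) closure_of (inf_fin X Y))"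
proof -
  obtain h where "homeomorphic_map X (zariski R) h"
    using assms(2) homeomorphic_maps_map unfolding homeomorphic_space_def by blast
  with assms(1) interpret zariski_homeomorphism X R h
    by (rule zariski_homeomorphism.intro)
  show ?thesis
    using sups_exist_and_sup_all_subset_cons_closure[OF assms(3)]
      infs_exist_and_inf_all_subset_cons_closure[OF assms(3)] by blast
qed

end
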